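(* Let $\mathcal H_A$ be a finite-dimensional Hilbert space, $N\ge1$, and $\mathcal F(A)\subseteq\mathcal D(\mathcal H_A)$ a set of free states which is affine, with $N$-partite free states $\mathcal F(A_1\dots A_N)=\mathrm{Aff}\big(\mathcal F(A)\otimes\dots\otimes\mathcal F(A)\big)$ ($N$ factors). Suppose $\Delta$ is a resource-destroying map for $\mathcal F(A)$. Then the censorship implemented by $\Delta^{\otimes N}$ is unbreakable: there is no $\rho\in\mathcal D(\mathcal H_A^{\otimes N})$ with $\rho\notin\mathcal F(A_1\dots A_N)$ and $\Delta^{\otimes N}(\rho)=\rho$.
   Context: For a finite-dimensional Hilbert space $\mathcal H$, $\mathcal D(\mathcal H)$ denotes the set of density operators on $\mathcal H$. For $S\subseteq\mathcal D(\mathcal H)$, $\mathrm{Aff}(S)=\{\sum_a t_a\sigma_a:\ \text{finitely many }\sigma_a\in S,\ t_a\in\mathbb R,\ \sum_a t_a=1\}\cap\mathcal D(\mathcal H)$; $S$ is affine if $\mathrm{Aff}(S)=S$. For sets of states, $S_1\otimes\dots\otimes S_N=\{\rho_1\otimes\dots\otimes\rho_N:\rho_a\in S_a\}$. A channel is a linear completely positive trace-preserving map. A resource-destroying (RD) map for $\mathcal F(A)$ is a channel $\Delta$ on operators on $\mathcal H_A$ such that $\Delta(\rho)\in\mathcal F(A)$ for all $\rho\in\mathcal D(\mathcal H_A)$ and $\Delta(\sigma)=\sigma$ for all $\sigma\in\mathcal F(A)$. *)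

theory Defs
  imports "HOL-Analysis.Analysis"
begin

text \<open>Operators on a finite-dimensional Hilbert space with orthonormal basis indexed by a
finite set I are represented as complex-valued kernels on I x I, required to vanish outside I x I.\<close>

type_synonym 'i op = "'i \<Rightarrow> 'i \<Rightarrow> complex"

definition supp_op :: "'i set \<Rightarrow> 'i op \<Rightarrow> bool" where
  "supp_op I X \<longleftrightarrow> (\<forall>i j. (i \<notin> I \<or> j \<notin> I) \<longrightarrow> X i j = 0)"

definition psd :: "'i set \<Rightarrow> 'i op \<Rightarrow> bool" where
  "psd I X \<longleftrightarrow> supp_op I X \<and>
     (\<forall>v :: 'i \<Rightarrow> complex. Im (\<Sum>i\<in>I. \<Sum>j\<in>I. cnj (v i) * X i j * v j) = 0
                           \<and> Re (\<Sum>i\<in>I. \<Sum>j\<in>I. cnj (v i) * X i j * v j) \<ge> 0)"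

definition trace_op :: "'i set \<Rightarrow> 'i op \<Rightarrow> complex" where
  "trace_op I X = (\<Sum>i\<in>I. X i i)"

definition density_ops :: "'i set \<Rightarrow> 'i op set" where
  "density_ops I = {\<rho>. psd I \<rho> \<and> trace_op I \<rho> = 1}"

definition linear_on :: "'i set \<Rightarrow> ('i op \<Rightarrow> 'i op) \<Rightarrow> bool" where
  "linear_on I \<Phi> \<longleftrightarrow>
     (\<forall>X. supp_op I X \<longrightarrow> supp_op I (\<Phi> X)) \<and>
     (\<forall>X Y. supp_op I X \<and> supp_op I Y \<longrightarrow>
        \<Phi> (\<lambda>i j. X i j + Y i j) = (\<lambda>i j. \<Phi> X i j + \<Phi> Y i j)) \<and>
     (\<forall>c X. supp_op I X \<longrightarrow> \<Phi> (\<lambda>i j. c * X i j) = (\<lambda>i j. c * \<Phi> X i j))"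

text \<open>The map id_k \<otimes> \<Phi> acting on operators on C^k \<otimes> H (index set {..<k} \<times> I), blockwise.\<close>
definition ampl :: "nat \<Rightarrow> 'i set \<Rightarrow> ('i op \<Rightarrow> 'i op) \<Rightarrow> (nat \<times> 'i) op \<Rightarrow> (nat \<times> 'i) op" where
  "ampl k I \<Phi> X = (\<lambda>(a, i) (b, j). if a < k \<and> b < k then
       \<Phi> (\<lambda>i' j'. if i' \<in> I \<and> j' \<in> I then X (a, i') (b, j') else 0) i j else 0)"

definition completely_positive :: "'i set \<Rightarrow> ('i op \<Rightarrow> 'i op) \<Rightarrow> bool" where
  "completely_positive I \<Phi> \<longleftrightarrow>
     (\<forall>k X. psd ({..<k} \<times> I) X \<longrightarrow> psd ({..<k} \<times> I) (ampl k I \<Phi> X))"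

definition trace_preserving :: "'i set \<Rightarrow> ('i op \<Rightarrow> 'i op) \<Rightarrow> bool" where
  "trace_preserving I \<Phi> \<longleftrightarrow> (\<forall>X. supp_op I X \<longrightarrow> trace_op I (\<Phi> X) = trace_op I X)"

definition channel :: "'i set \<Rightarrow> ('i op \<Rightarrow> 'i op) \<Rightarrow> bool" where
  "channel I \<Phi> \<longleftrightarrow> linear_on I \<Phi> \<and> completely_positive I \<Phi> \<and> trace_preserving I \<Phi>"

definition rd_map :: "'i set \<Rightarrow> 'i op set \<Rightarrow> ('i op \<Rightarrow> 'i op) \<Rightarrow> bool" where
  "rd_map I F \<Delta> \<longleftrightarrow> channel I \<Delta> \<and> (\<forall>\<rho>\<in>density_ops I. \<Delta> \<rho> \<in> F) \<and> (\<forall>\<sigma>\<in>F. \<Delta> \<sigma> = \<sigma>)"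

definition aff_states :: "'i set \<Rightarrow> 'i op set \<Rightarrow> 'i op set" where
  "aff_states I S = {\<rho> \<in> density_ops I. \<exists>(n::nat) \<sigma> t.
      (\<forall>a<n. \<sigma> a \<in> S) \<and> (\<Sum>a<n. t a) = (1::real) \<and>
      \<rho> = (\<lambda>i j. \<Sum>a<n. complex_of_real (t a) * \<sigma> a i j)}"

text \<open>Basis of H^{\<otimes>N}: index lists of length N with entries in I.\<close>
definition tidx :: "'i set \<Rightarrow> nat \<Rightarrow> 'i list set" where
  "tidx I N = {xs. length xs = N \<and> set xs \<subseteq> I}"

definition unit_op :: "'i \<Rightarrow> 'i \<Rightarrow> 'i op" where
  "unit_op k l = (\<lambda>i j. if i = k \<and> j = l then 1 else 0)"

definition tensor_list :: "'i set \<Rightarrow> nat \<Rightarrow> 'i op list \<Rightarrow> 'i list op" where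
  "tensor_list I N \<rho>s = (\<lambda>is js. if is \<in> tidx I N \<and> js \<in> tidx I N
      then (\<Prod>a<N. (\<rho>s ! a) (is ! a) (js ! a)) else 0)"

definition prod_states :: "'i set \<Rightarrow> nat \<Rightarrow> 'i op set \<Rightarrow> 'i list op set" where
  "prod_states I N F = {tensor_list I N \<rho>s | \<rho>s. length \<rho>s = N \<and> set \<rho>s \<subseteq> F}"

text \<open>\<Phi>^{\<otimes>N}: the linear map on operators on H^{\<otimes>N} acting as \<Phi> on each factor,
  written via the matrix coefficients of \<Phi> w.r.t. the matrix units.\<close>
definition tensor_power_map :: "'i set \<Rightarrow> nat \<Rightarrow> ('i op \<Rightarrow> 'i op) \<Rightarrow> 'i list op \<Rightarrow> 'i list op" where
  "tensor_power_map I N \<Phi> X = (\<lambda>is js. if is \<in> tidx I N \<and> js \<in> tidx I N then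
      (\<Sum>ks\<in>tidx I N. \<Sum>ls\<in>tidx I N.
         (\<Prod>a<N. \<Phi> (unit_op (ks ! a) (ls ! a)) (is ! a) (js ! a)) * X ks ls)
      else 0)"

end

theory Submission
  imports Defs
begin

text \<open>By polarization every matrix unit \<open>|k\<rangle>\<langle>l|\<close> is a complex combination of four density
  operators, so a resource-destroying map \<open>\<Delta>\<close> sends it into the complex span of \<open>\<F>(A)\<close>, and
  \<open>\<Delta>\<^sup>\<otimes>\<^sup>N\<close> sends every operator into the complex span of products of free states.
  A fixed point \<open>\<rho>\<close> is thus such a combination; since \<open>\<rho>\<close> and the product states are
  Hermitian, the coefficients may be replaced by their real parts, which sum to \<open>tr \<rho> = 1\<close>.\<close>

definition hermitian_op :: "'i op \<Rightarrow> bool" where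
  "hermitian_op X \<longleftrightarrow> (\<forall>i j. X i j = cnj (X j i))"

definition quad_form :: "'i set \<Rightarrow> 'i op \<Rightarrow> ('i \<Rightarrow> complex) \<Rightarrow> complex" where
  "quad_form I X v = (\<Sum>i\<in>I. \<Sum>j\<in>I. cnj (v i) * X i j * v j)"

lemma quad_form_two_points:
  assumes "finite I" "i \<in> I" "j \<in> I"
  shows "quad_form I X (\<lambda>x. (if x = i then a else 0) + (if x = j then b else 0)) =
     cnj a * X i i * a + cnj a * X i j * b + cnj b * X j i * a + cnj b * X j j * b"
  using assms by (simp add: quad_form_def ring_distribs sum.distrib if_distrib[of cnj]
      if_distrib[of "\<lambda>z. z * _"] if_distrib[of "\<lambda>z. _ * z"] cong: if_cong)

lemma psd_quad_form: "psd I X \<Longrightarrow> Im (quad_form I X v) = 0 \<and> Re (quad_form I X v) \<ge> 0"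
  unfolding psd_def quad_form_def by blast

lemma psd_hermitian:
  assumes "finite I" "psd I X"
  shows "hermitian_op X"
  unfolding hermitian_op_def
proof (intro allI)
  fix i j
  show "X i j = cnj (X j i)"
  proof (cases "i \<in> I \<and> j \<in> I")
    case False
    then show ?thesis using assms(2) unfolding psd_def supp_op_def by auto
  next
    case True
    have "Im (quad_form I X (\<lambda>x. (if x = i then a else 0) + (if x = j then b else 0))) = 0" for a b
      using psd_quad_form[OF assms(2)] by blast
    then have real_form:
      "Im (cnj a * X i i * a + cnj a * X i j * b + cnj b * X j i * a + cnj b * X j j * b) = 0" for a b
      unfolding quad_form_two_points[OF assms(1) conjunct1[OF True] conjunct2[OF True]] .
    from real_form[of 1 0] real_form[of 0 1] real_form[of 1 1] real_form[of 1 \<i>]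
    show ?thesis by (simp add: complex_eq_iff algebra_simps)
  qed
qed

definition rank_one :: "('i \<Rightarrow> complex) \<Rightarrow> 'i op" where
  "rank_one w = (\<lambda>i j. w i * cnj (w j))"

lemma psd_rank_one:
  assumes "\<forall>x. x \<notin> I \<longrightarrow> w x = 0"
  shows "psd I (rank_one w)"
proof -
  have "quad_form I (rank_one w) v = (\<Sum>i\<in>I. cnj (v i) * w i) * cnj (\<Sum>i\<in>I. cnj (v i) * w i)" for v
    by (simp add: quad_form_def rank_one_def sum_distrib_left sum_distrib_right mult_ac)
  moreover have "Im (z * cnj z) = 0 \<and> Re (z * cnj z) \<ge> 0" for z
    by (simp add: complex_mult_cnj)
  moreover have "supp_op I (rank_one w)" using assms unfolding supp_op_def rank_one_def by auto
  ultimately show ?thesis unfolding psd_def quad_form_def[symmetric] by metis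
qed

lemma psd_scale:
  assumes "psd I X" "r \<ge> 0"
  shows "psd I (\<lambda>i j. of_real r * X i j)"
proof -
  have "quad_form I (\<lambda>i j. of_real r * X i j) v = of_real r * quad_form I X v" for v
    by (simp add: quad_form_def sum_distrib_left mult_ac)
  then show ?thesis using assms psd_quad_form[OF assms(1)] unfolding psd_def quad_form_def[symmetric]
    by (auto simp: supp_op_def)
qed

definition phase :: "nat \<Rightarrow> complex" where
  "phase s = [1, -1, \<i>, -\<i>] ! s"

lemma sum_lessThan_4: "(\<Sum>s<(4::nat). f s) = f 0 + f 1 + f 2 + (f 3 :: 'a::comm_monoid_add)"
  by (simp add: eval_nat_numeral)

text \<open>For \<open>k \<noteq> l\<close>, polarization writes \<open>|k\<rangle>\<langle>l|\<close> as \<open>\<Sum>s. (phase s / 2) \<sigma>\<^sub>s\<close>, where \<open>\<sigma>\<^sub>s\<close> is the pure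
  state of \<open>(|k\<rangle> + phase s |l\<rangle>) / \<surd>2\<close>; for \<open>k = l\<close> the matrix unit is itself a state.\<close>

definition polar_coeff :: "'i \<Rightarrow> 'i \<Rightarrow> nat \<Rightarrow> complex" where
  "polar_coeff k l s = (if k = l then of_bool (s = 0) else phase s / 2)"

definition polar_state :: "'i \<Rightarrow> 'i \<Rightarrow> nat \<Rightarrow> 'i op" where
  "polar_state k l s = (if k = l then unit_op k k
     else (\<lambda>i j. 1/2 * rank_one (\<lambda>x. (if x = k then 1 else 0) + (if x = l then phase s else 0)) i j))"

lemma unit_op_polar_expansion:
  "unit_op k l = (\<lambda>i j. \<Sum>s<4. polar_coeff k l s * polar_state k l s i j)"
  by (auto simp: fun_eq_iff sum_lessThan_4 polar_coeff_def polar_state_def unit_op_def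
      rank_one_def phase_def field_simps)

lemma polar_state_density:
  assumes "finite I" "k \<in> I" "l \<in> I" "s < 4"
  shows "polar_state k l s \<in> density_ops I"
proof (cases "k = l")
  case True
  have "unit_op k k = rank_one (\<lambda>x. if x = k then 1 else 0)"
    by (simp add: fun_eq_iff unit_op_def rank_one_def)
  moreover have "psd I (rank_one (\<lambda>x. if x = k then 1 else 0))"
    using assms by (intro psd_rank_one) auto
  moreover have "trace_op I (unit_op k k) = 1"
    using assms by (simp add: trace_op_def unit_op_def)
  ultimately show ?thesis using True by (simp add: density_ops_def polar_state_def)
next
  case False
  let ?\<sigma> = "\<lambda>i j. 1/2 * rank_one (\<lambda>x. (if x = k then 1 else 0) + (if x = l then phase s else 0)) i j"
  have "psd I ?\<sigma>"
    using psd_scale[OF psd_rank_one, of I _ "1/2"] assms(2,3) by auto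
  moreover have "phase s * cnj (phase s) = 1"
    using \<open>s < 4\<close> by (auto simp: phase_def less_Suc_eq numeral_eq_Suc)
  then have "trace_op I ?\<sigma> = 1"
    using assms False by (simp add: trace_op_def rank_one_def sum.distrib ring_distribs if_distrib[of cnj]
        if_distrib[of "\<lambda>z. z * _"] if_distrib[of "\<lambda>z. _ * z"] cong: if_cong)
  ultimately show ?thesis using False by (simp add: density_ops_def polar_state_def)
qed

lemma linear_on_zero: "linear_on I \<Phi> \<Longrightarrow> \<Phi> (\<lambda>i j. 0) = (\<lambda>i j. 0)"
proof -
  assume "linear_on I \<Phi>"
  moreover have "supp_op I (\<lambda>i j. 0)" by (simp add: supp_op_def)
  ultimately have "\<Phi> (\<lambda>i j. 0 * (\<lambda>i j. 0) i j) = (\<lambda>i j. 0 * \<Phi> (\<lambda>i j. 0) i j)"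
    unfolding linear_on_def by blast
  then show ?thesis by simp
qed

lemma linear_on_sum:
  assumes "linear_on I \<Phi>" "finite S" "\<forall>s\<in>S. supp_op I (X s)"
  shows "\<Phi> (\<lambda>i j. \<Sum>s\<in>S. c s * X s i j) = (\<lambda>i j. \<Sum>s\<in>S. c s * \<Phi> (X s) i j)"
  using assms(2,3)
proof (induction S rule: finite_induct)
  case empty
  then show ?case using linear_on_zero[OF assms(1)] by simp
next
  case (insert s S)
  have "supp_op I (\<lambda>i j. c s * X s i j)" and "supp_op I (\<lambda>i j. \<Sum>s\<in>S. c s * X s i j)"
    using insert.prems unfolding supp_op_def by auto
  then show ?case
    using assms(1) insert unfolding linear_on_def by simp
qed

lemma rd_map_unit_op_expansion:
  assumes "finite I" "rd_map I F \<Delta>" "k \<in> I" "l \<in> I"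
  shows "\<Delta> (unit_op k l) = (\<lambda>i j. \<Sum>s<4. polar_coeff k l s * \<Delta> (polar_state k l s) i j)"
proof -
  have "\<forall>s\<in>{..<4}. supp_op I (polar_state k l s)"
    using polar_state_density[OF assms(1,3,4)] unfolding density_ops_def psd_def by auto
  then show ?thesis
    using assms(2) linear_on_sum unfolding unit_op_polar_expansion[of k l] rd_map_def channel_def
    by blast
qed

lemma rd_map_polar_state_free:
  assumes "finite I" "rd_map I F \<Delta>" "k \<in> I" "l \<in> I" "s < 4"
  shows "\<Delta> (polar_state k l s) \<in> F"
  using polar_state_density[OF assms(1,3-5)] assms(2) unfolding rd_map_def by blast

lemma finite_tidx: "finite I \<Longrightarrow> finite (tidx I N)"
  unfolding tidx_def using finite_lists_length_eq[of I N] by (simp add: conj_commute)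

lemma tidx_nth_mem: "xs \<in> tidx I N \<Longrightarrow> a < N \<Longrightarrow> xs ! a \<in> I"
  unfolding tidx_def by auto

lemma sum_tidx_prod:
  fixes g :: "nat \<Rightarrow> 'i \<Rightarrow> 'a::comm_semiring_1"
  shows "(\<Sum>xs\<in>tidx I N. \<Prod>a<N. g a (xs ! a)) = (\<Prod>a<N. \<Sum>x\<in>I. g a x)"
proof (induction N arbitrary: g)
  case 0
  have "tidx I 0 = {[]}" by (auto simp: tidx_def)
  then show ?case by simp
next
  case (Suc N)
  have cons_image: "tidx I (Suc N) = (\<lambda>(x, xs). x # xs) ` (I \<times> tidx I N)"
    by (auto simp: tidx_def image_iff length_Suc_conv)
  have "inj_on (\<lambda>(x, xs). x # xs) (I \<times> tidx I N)" by (auto simp: inj_on_def)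
  then have "(\<Sum>xs\<in>tidx I (Suc N). \<Prod>a<Suc N. g a (xs ! a))
      = (\<Sum>(x, xs)\<in>I \<times> tidx I N. g 0 x * (\<Prod>a<N. g (Suc a) (xs ! a)))"
    unfolding cons_image
    by (subst sum.reindex) (auto simp only: prod.lessThan_Suc_shift intro!: sum.cong, simp)
  also have "\<dots> = (\<Sum>x\<in>I. g 0 x) * (\<Sum>xs\<in>tidx I N. \<Prod>a<N. g (Suc a) (xs ! a))"
    by (simp add: sum.cartesian_product[symmetric] sum_distrib_left sum_distrib_right sum.swap[of _ I])
  also have "\<dots> = (\<Prod>a<Suc N. \<Sum>x\<in>I. g a x)"
    using Suc.IH[of "\<lambda>a. g (Suc a)"] by (simp only: prod.lessThan_Suc_shift)
  finally show ?case .
qed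

lemma hermitian_tensor_list:
  assumes "\<forall>a<N. hermitian_op (\<rho>s ! a)"
  shows "hermitian_op (tensor_list I N \<rho>s)"
proof -
  have "(\<Prod>a<N. (\<rho>s ! a) (is ! a) (js ! a)) = cnj (\<Prod>a<N. (\<rho>s ! a) (js ! a) (is ! a))" for "is" js
    unfolding cnj_prod using assms unfolding hermitian_op_def by (intro prod.cong) blast+
  then show ?thesis unfolding hermitian_op_def tensor_list_def by simp
qed

lemma trace_tensor_list:
  "trace_op (tidx I N) (tensor_list I N \<rho>s) = (\<Prod>a<N. trace_op I (\<rho>s ! a))"
proof -
  have "trace_op (tidx I N) (tensor_list I N \<rho>s) = (\<Sum>xs\<in>tidx I N. \<Prod>a<N. (\<rho>s ! a) (xs ! a) (xs ! a))"
    unfolding trace_op_def tensor_list_def by simp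
  also have "\<dots> = (\<Prod>a<N. trace_op I (\<rho>s ! a))"
    unfolding trace_op_def by (rule sum_tidx_prod)
  finally show ?thesis .
qed

lemma prod_states_hermitian_trace:
  assumes "finite I" "F \<subseteq> density_ops I" "\<sigma> \<in> prod_states I N F"
  shows "hermitian_op \<sigma> \<and> trace_op (tidx I N) \<sigma> = 1"
proof -
  obtain \<rho>s where \<sigma>: "\<sigma> = tensor_list I N \<rho>s" and "length \<rho>s = N" "set \<rho>s \<subseteq> F"
    using assms(3) unfolding prod_states_def by blast
  then have "\<rho>s ! a \<in> density_ops I" if "a < N" for a
    using assms(2) that nth_mem by blast
  then have "hermitian_op (\<rho>s ! a) \<and> trace_op I (\<rho>s ! a) = 1" if "a < N" for a
    using psd_hermitian[OF assms(1)] that unfolding density_ops_def by blast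
  then show ?thesis
    unfolding \<sigma> by (simp add: hermitian_tensor_list trace_tensor_list)
qed

lemma tensor_power_map_expansion:
  assumes "\<forall>k\<in>I. \<forall>l\<in>I. \<Phi> (unit_op k l) = (\<lambda>i j. \<Sum>s<m. C k l s * S k l s i j)"
  shows "tensor_power_map I N \<Phi> X = (\<lambda>is js.
      \<Sum>(ks, ls, ss) \<in> tidx I N \<times> tidx I N \<times> tidx {..<m} N.
        X ks ls * (\<Prod>a<N. C (ks ! a) (ls ! a) (ss ! a)) *
        tensor_list I N (map (\<lambda>a. S (ks ! a) (ls ! a) (ss ! a)) [0..<N]) is js)"
proof (intro ext)
  fix "is" js
  show "tensor_power_map I N \<Phi> X is js = (\<Sum>(ks, ls, ss) \<in> tidx I N \<times> tidx I N \<times> tidx {..<m} N.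
        X ks ls * (\<Prod>a<N. C (ks ! a) (ls ! a) (ss ! a)) *
        tensor_list I N (map (\<lambda>a. S (ks ! a) (ls ! a) (ss ! a)) [0..<N]) is js)"
  proof (cases "is \<in> tidx I N \<and> js \<in> tidx I N")
    case False
    then have "tensor_list I N \<rho>s is js = 0" for \<rho>s unfolding tensor_list_def by auto
    with False show ?thesis unfolding tensor_power_map_def by auto
  next
    case True
    have factor: "(\<Prod>a<N. \<Phi> (unit_op (ks ! a) (ls ! a)) (is ! a) (js ! a)) =
        (\<Sum>ss\<in>tidx {..<m} N. (\<Prod>a<N. C (ks ! a) (ls ! a) (ss ! a)) *
           tensor_list I N (map (\<lambda>a. S (ks ! a) (ls ! a) (ss ! a)) [0..<N]) is js)"
      if "ks \<in> tidx I N" "ls \<in> tidx I N" for ks ls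
    proof -
      have "(\<Prod>a<N. \<Phi> (unit_op (ks ! a) (ls ! a)) (is ! a) (js ! a)) =
          (\<Prod>a<N. \<Sum>s<m. C (ks ! a) (ls ! a) s * S (ks ! a) (ls ! a) s (is ! a) (js ! a))"
        using assms tidx_nth_mem[OF that(1)] tidx_nth_mem[OF that(2)] by (intro prod.cong) auto
      also have "\<dots> = (\<Sum>ss\<in>tidx {..<m} N.
          \<Prod>a<N. C (ks ! a) (ls ! a) (ss ! a) * S (ks ! a) (ls ! a) (ss ! a) (is ! a) (js ! a))"
        by (rule sum_tidx_prod[symmetric])
      finally show ?thesis
        using True by (simp add: tensor_list_def prod.distrib)
    qed
    have "tensor_power_map I N \<Phi> X is js = (\<Sum>ks\<in>tidx I N. \<Sum>ls\<in>tidx I N.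
        (\<Prod>a<N. \<Phi> (unit_op (ks ! a) (ls ! a)) (is ! a) (js ! a)) * X ks ls)"
      using True by (simp add: tensor_power_map_def)
    also have "\<dots> = (\<Sum>ks\<in>tidx I N. \<Sum>ls\<in>tidx I N. \<Sum>ss\<in>tidx {..<m} N.
        X ks ls * (\<Prod>a<N. C (ks ! a) (ls ! a) (ss ! a)) *
        tensor_list I N (map (\<lambda>a. S (ks ! a) (ls ! a) (ss ! a)) [0..<N]) is js)"
      using factor by (simp add: sum_distrib_left sum_distrib_right mult_ac)
    finally show ?thesis
      by (simp add: sum.cartesian_product)
  qed
qed

lemma aff_statesI:
  assumes "\<rho> \<in> density_ops J" "finite B" "\<forall>b\<in>B. \<tau> b \<in> S" "(\<Sum>b\<in>B. t b) = 1"
    and "\<rho> = (\<lambda>i j. \<Sum>b\<in>B. complex_of_real (t b) * \<tau> b i j)"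
  shows "\<rho> \<in> aff_states J S"
proof -
  obtain h where h: "bij_betw h {..<card B} B"
    using ex_bij_betw_nat_finite[OF assms(2)] by (auto simp: atLeast0LessThan)
  show ?thesis
    unfolding aff_states_def
  proof (intro CollectI conjI exI)
    show "\<forall>a<card B. \<tau> (h a) \<in> S" using h assms(3) bij_betwE by fastforce
    show "(\<Sum>a<card B. t (h a)) = 1" using assms(4) sum.reindex_bij_betw[OF h, of t] by simp
    show "\<rho> = (\<lambda>i j. \<Sum>a<card B. complex_of_real (t (h a)) * \<tau> (h a) i j)"
    proof (intro ext)
      fix i j
      show "\<rho> i j = (\<Sum>a<card B. complex_of_real (t (h a)) * \<tau> (h a) i j)"
        using assms(5) sum.reindex_bij_betw[OF h, of "\<lambda>b. complex_of_real (t b) * \<tau> b i j"] by simp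
    qed
  qed (fact assms(1))
qed

lemma hermitian_combination_in_aff_states:
  assumes "\<rho> \<in> density_ops J" "finite J" "finite B" "\<forall>b\<in>B. \<tau> b \<in> S"
    and "\<forall>\<sigma>\<in>S. hermitian_op \<sigma> \<and> trace_op J \<sigma> = 1"
    and \<rho>_eq: "\<rho> = (\<lambda>i j. \<Sum>b\<in>B. c b * \<tau> b i j)"
  shows "\<rho> \<in> aff_states J S"
proof (rule aff_statesI[OF assms(1,3,4)])
  have \<tau>: "hermitian_op (\<tau> b) \<and> trace_op J (\<tau> b) = 1" if "b \<in> B" for b
    using assms(4,5) that by blast
  have \<tau>_herm: "cnj (\<tau> b j i) = \<tau> b i j" if "b \<in> B" for b i j
    using \<tau>[OF that] unfolding hermitian_op_def by (metis complex_cnj_cnj)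
  have "hermitian_op \<rho>" using assms(1,2) psd_hermitian unfolding density_ops_def by blast
  then have "\<rho> i j = cnj (\<Sum>b\<in>B. c b * \<tau> b j i)" for i j
    unfolding hermitian_op_def by (metis \<rho>_eq)
  also have "cnj (\<Sum>b\<in>B. c b * \<tau> b j i) = (\<Sum>b\<in>B. cnj (c b) * \<tau> b i j)" for i j
    using \<tau>_herm by (simp add: cnj_sum)
  finally have "2 * \<rho> i j = (\<Sum>b\<in>B. (c b + cnj (c b)) * \<tau> b i j)" for i j
    using \<rho>_eq by (simp add: sum.distrib distrib_right)
  then have "2 * \<rho> i j = 2 * (\<Sum>b\<in>B. complex_of_real (Re (c b)) * \<tau> b i j)" for i j
    by (simp add: complex_add_cnj sum_distrib_left mult.assoc)
  then show real_eq: "\<rho> = (\<lambda>i j. \<Sum>b\<in>B. complex_of_real (Re (c b)) * \<tau> b i j)"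
    by (simp add: fun_eq_iff)
  have "trace_op J \<rho> = (\<Sum>b\<in>B. complex_of_real (Re (c b)) * trace_op J (\<tau> b))"
    by (subst real_eq) (simp add: trace_op_def sum_distrib_left sum.swap[of _ J])
  also have "\<dots> = complex_of_real (\<Sum>b\<in>B. Re (c b))"
    using \<tau> by simp
  finally show "(\<Sum>b\<in>B. Re (c b)) = 1"
    using assms(1) unfolding density_ops_def by (simp del: of_real_sum)
qed

theorem theorem2:
  fixes d N :: nat
    and F :: "nat op set"
    and \<Delta> :: "nat op \<Rightarrow> nat op"
  assumes "N \<ge> 1"
    and "F \<subseteq> density_ops {..<d}"
    and "aff_states {..<d} F = F"
    and "rd_map {..<d} F \<Delta>"
  shows "\<not> (\<exists>\<rho> \<in> density_ops (tidx {..<d} N).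
            \<rho> \<notin> aff_states (tidx {..<d} N) (prod_states {..<d} N F) \<and>
            tensor_power_map {..<d} N \<Delta> \<rho> = \<rho>)"
proof
  let ?I = "{..<d}" and ?J = "tidx {..<d} N"
  let ?B = "?J \<times> ?J \<times> tidx {..<4} N"
  assume "\<exists>\<rho> \<in> density_ops ?J. \<rho> \<notin> aff_states ?J (prod_states ?I N F) \<and>
            tensor_power_map ?I N \<Delta> \<rho> = \<rho>"
  then obtain \<rho> where \<rho>: "\<rho> \<in> density_ops ?J" and not_free: "\<rho> \<notin> aff_states ?J (prod_states ?I N F)"
    and fixed: "tensor_power_map ?I N \<Delta> \<rho> = \<rho>" by blast
  define c where "c = (\<lambda>(ks, ls, ss). \<rho> ks ls * (\<Prod>a<N. polar_coeff (ks ! a) (ls ! a) (ss ! a)))"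
  define \<tau> where "\<tau> = (\<lambda>(ks, ls, ss).
      tensor_list ?I N (map (\<lambda>a. \<Delta> (polar_state (ks ! a) (ls ! a) (ss ! a))) [0..<N]))"
  have "\<rho> = (\<lambda>i j. \<Sum>b\<in>?B. c b * \<tau> b i j)"
    using fixed tensor_power_map_expansion[where m = 4 and C = polar_coeff
        and S = "\<lambda>k l s. \<Delta> (polar_state k l s)"]
      rd_map_unit_op_expansion[OF _ assms(4)]
    by (simp add: c_def \<tau>_def case_prod_beta)
  moreover have "\<tau> (ks, ls, ss) \<in> prod_states ?I N F" if "(ks, ls, ss) \<in> ?B" for ks ls ss
  proof -
    have "ks ! a < d" "ls ! a < d" "ss ! a < 4" if "a < N" for a
      using \<open>(ks, ls, ss) \<in> ?B\<close> tidx_nth_mem[OF _ that] by auto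
    then have "\<Delta> (polar_state (ks ! a) (ls ! a) (ss ! a)) \<in> F" if "a < N" for a
      using rd_map_polar_state_free[OF _ assms(4)] that by simp
    then show ?thesis unfolding \<tau>_def prod_states_def by (auto intro!: exI)
  qed
  ultimately have "\<rho> \<in> aff_states ?J (prod_states ?I N F)"
    using prod_states_hermitian_trace[OF _ assms(2)]
    by (intro hermitian_combination_in_aff_states[OF \<rho>]) (auto simp: finite_tidx)
  with not_free show False by contradiction
qed

end
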